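(* Let $Q$ be a quiver and let $\Pi\in\mathcal{V}^2Q$ be a Poisson structure on $\mathbb{C}Q$ such that $\Pi=\Pi^1+\Pi^2$, where $\Pi^1$ and $\Pi^2$ are homogeneous of different degrees. Then $\Pi^1$ and $\Pi^2$ are compatible Poisson structures on $\mathbb{C}Q$, i.e. $[\Pi^i,\Pi^j]_{\mathcal V}=0$ for $i,j=1,2$.
   Context: A quiver $Q$ has vertex set $I=\{1,\dots,k\}$, arrows $Q$, head/tail maps $h,t$. The path algebra $\mathbb{C}Q$ has basis the paths (including trivial paths $e_i$), multiplied by concatenation written right to left. The double quiver $\bar Q$ has arrows $Q\cup\{a^*\}$ with $h(a^* )=t(a)$, $t(a^* )=h(a)$; $\mathbb{C}\bar Q^r$ is spanned by paths with exactly $r$ starred arrows. $\mathcal{V}Q$ is the quotient of $\mathbb{C}\bar Q$ by the span of $PR-(-1)^{pr}RP$ ($P\in\mathbb{C}\bar Q^p$, $R\in\mathbb{C}\bar Q^r$), graded by $r$. For $w\in\bar Q$, $D_w(x_1\cdots x_n)=\sum_{i:x_i=w}(-1)^{\lambda_i\mu_i}x_{i+1}\cdots x_nx_1\cdots x_{i-1}$, $\lambda_i$ (resp. $\mu_i$) the number of starred arrows among $x_{i+1},\dots,x_n$ (resp. $x_1,\dots,x_i$). For $\gamma\in\mathcal{V}^rQ,\delta\in\mathcal{V}^sQ$: $[\gamma,\delta]_{\mathcal V}=\sum_{a\in Q}\big(D_{a^*}(\gamma)D_a(\delta)-(-1)^{(r-1)(s-1)}D_{a^*}(\delta)D_a(\gamma)\big)$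 modulo the relations. A Poisson structure on $\mathbb{C}Q$ is $\Pi\in\mathcal{V}^2Q$ with $[\Pi,\Pi]_{\mathcal V}=0$. Every element of $\mathcal{V}^2Q$ can be written as $\sum_{a,b\in Q}\sum_{P,R}[Pa^*,Rb^*]$ with $P,R\in\mathbb{C}Q$ paths, where $[u,v]=uv-vu$; such an element is homogeneous of degree $p$ if each nonzero closed path $Pa^*Rb^*$ occurring has length $p+2$. *)

theory Defs
  imports Complex_Main "HOL-Library.Function_Algebras"
begin

text \<open>
Double quiver: arrows Arr a (a in Q) and Star a (the starred arrow a*).
A path of the double quiver is a pair (i, xs): xs = [x1,...,xn] is the word
x1 x2 ... xn (composition right to left, so xn is traversed first), and i is
its head vertex; the trivial path e_i is (i, []).
Elements of the path algebra C(Qbar) are finitely supported functions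
path => complex (coefficient of each basis path).
\<close>

datatype 'a darr = Arr 'a | Star 'a

type_synonym ('v, 'a) qpath = "'v \<times> 'a darr list"
type_synonym ('v, 'a) qelt = "('v, 'a) qpath \<Rightarrow> complex"

fun dh :: "('a \<Rightarrow> 'v) \<Rightarrow> ('a \<Rightarrow> 'v) \<Rightarrow> 'a darr \<Rightarrow> 'v" where
  "dh h t (Arr a) = h a"
| "dh h t (Star a) = t a"

fun dt :: "('a \<Rightarrow> 'v) \<Rightarrow> ('a \<Rightarrow> 'v) \<Rightarrow> 'a darr \<Rightarrow> 'v" where
  "dt h t (Arr a) = t a"
| "dt h t (Star a) = h a"

fun base :: "'a darr \<Rightarrow> 'a" where
  "base (Arr a) = a"
| "base (Star a) = a"

fun isStar :: "'a darr \<Rightarrow> bool" where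
  "isStar (Arr a) = False"
| "isStar (Star a) = True"

definition nstars :: "'a darr list \<Rightarrow> nat" where
  "nstars xs = length (filter isStar xs)"

fun chain :: "('a \<Rightarrow> 'v) \<Rightarrow> ('a \<Rightarrow> 'v) \<Rightarrow> 'a darr list \<Rightarrow> bool" where
  "chain h t [] = True"
| "chain h t [x] = True"
| "chain h t (x # y # xs) = (dt h t x = dh h t y \<and> chain h t (y # xs))"

definition quiver :: "'v set \<Rightarrow> 'a set \<Rightarrow> ('a \<Rightarrow> 'v) \<Rightarrow> ('a \<Rightarrow> 'v) \<Rightarrow> bool" where
  "quiver V A h t \<longleftrightarrow> finite V \<and> (\<forall>a\<in>A. h a \<in> V \<and> t a \<in> V)"

definition valid_path :: "'v set \<Rightarrow> 'a set \<Rightarrow> ('a \<Rightarrow> 'v) \<Rightarrow> ('a \<Rightarrow> 'v)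
    \<Rightarrow> ('v, 'a) qpath \<Rightarrow> bool" where
  "valid_path V A h t p \<longleftrightarrow> fst p \<in> V \<and> (\<forall>x\<in>set (snd p). base x \<in> A)
     \<and> chain h t (snd p) \<and> (snd p \<noteq> [] \<longrightarrow> fst p = dh h t (hd (snd p)))"

definition Q_path :: "'v set \<Rightarrow> 'a set \<Rightarrow> ('a \<Rightarrow> 'v) \<Rightarrow> ('a \<Rightarrow> 'v)
    \<Rightarrow> ('v, 'a) qpath \<Rightarrow> bool" where
  "Q_path V A h t p \<longleftrightarrow> valid_path V A h t p \<and> nstars (snd p) = 0"

definition ptail :: "('a \<Rightarrow> 'v) \<Rightarrow> ('a \<Rightarrow> 'v) \<Rightarrow> ('v, 'a) qpath \<Rightarrow> 'v" where
  "ptail h t p = (if snd p = [] then fst p else dt h t (last (snd p)))"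

definition closed_path :: "('a \<Rightarrow> 'v) \<Rightarrow> ('a \<Rightarrow> 'v) \<Rightarrow> ('v, 'a) qpath \<Rightarrow> bool" where
  "closed_path h t p \<longleftrightarrow> ptail h t p = fst p"

text \<open>product of basis paths P R (R first, then P); None means the product is 0\<close>
definition pmul :: "('a \<Rightarrow> 'v) \<Rightarrow> ('a \<Rightarrow> 'v) \<Rightarrow> ('v, 'a) qpath \<Rightarrow> ('v, 'a) qpath
    \<Rightarrow> ('v, 'a) qpath option" where
  "pmul h t P R = (if ptail h t P = fst R then Some (fst P, snd P @ snd R) else None)"

definition omul :: "('a \<Rightarrow> 'v) \<Rightarrow> ('a \<Rightarrow> 'v) \<Rightarrow> ('v, 'a) qpath option
    \<Rightarrow> ('v, 'a) qpath option \<Rightarrow> ('v, 'a) qpath option" where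
  "omul h t P R = (case (P, R) of (Some P', Some R') \<Rightarrow> pmul h t P' R' | _ \<Rightarrow> None)"

definition single :: "('v, 'a) qpath \<Rightarrow> ('v, 'a) qelt" where
  "single p = (\<lambda>q. if q = p then 1 else 0)"

definition of_popt :: "('v, 'a) qpath option \<Rightarrow> ('v, 'a) qelt" where
  "of_popt P = (case P of None \<Rightarrow> 0 | Some p \<Rightarrow> single p)"

definition scale :: "complex \<Rightarrow> ('v, 'a) qelt \<Rightarrow> ('v, 'a) qelt" where
  "scale c f = (\<lambda>q. c * f q)"

definition supp :: "('v, 'a) qelt \<Rightarrow> ('v, 'a) qpath set" where
  "supp f = {p. f p \<noteq> 0}"

definition emul :: "('a \<Rightarrow> 'v) \<Rightarrow> ('a \<Rightarrow> 'v) \<Rightarrow> ('v, 'a) qelt \<Rightarrow> ('v, 'a) qelt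
    \<Rightarrow> ('v, 'a) qelt" where
  "emul h t f g = (\<Sum>P\<in>supp f. \<Sum>R\<in>supp g. scale (f P * g R) (of_popt (pmul h t P R)))"

definition grel :: "('a \<Rightarrow> 'v) \<Rightarrow> ('a \<Rightarrow> 'v) \<Rightarrow> ('v, 'a) qpath \<Rightarrow> ('v, 'a) qpath
    \<Rightarrow> ('v, 'a) qelt" where
  "grel h t P R = of_popt (pmul h t P R)
     - scale ((-1) ^ (nstars (snd P) * nstars (snd R))) (of_popt (pmul h t R P))"

text \<open>The linear span of the relations; V Q = C(Qbar) / relspan\<close>
inductive_set relspan :: "'v set \<Rightarrow> 'a set \<Rightarrow> ('a \<Rightarrow> 'v) \<Rightarrow> ('a \<Rightarrow> 'v)
    \<Rightarrow> ('v, 'a) qelt set" for V A h t where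
  zero: "0 \<in> relspan V A h t"
| step: "\<lbrakk>valid_path V A h t P; valid_path V A h t R; x \<in> relspan V A h t\<rbrakk>
         \<Longrightarrow> x + scale c (grel h t P R) \<in> relspan V A h t"

definition veq :: "'v set \<Rightarrow> 'a set \<Rightarrow> ('a \<Rightarrow> 'v) \<Rightarrow> ('a \<Rightarrow> 'v)
    \<Rightarrow> ('v, 'a) qelt \<Rightarrow> ('v, 'a) qelt \<Rightarrow> bool" where
  "veq V A h t f g \<longleftrightarrow> f - g \<in> relspan V A h t"

definition in_CQbar :: "'v set \<Rightarrow> 'a set \<Rightarrow> ('a \<Rightarrow> 'v) \<Rightarrow> ('a \<Rightarrow> 'v) \<Rightarrow> nat
    \<Rightarrow> ('v, 'a) qelt \<Rightarrow> bool" where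
  "in_CQbar V A h t r f \<longleftrightarrow> finite (supp f)
     \<and> (\<forall>p\<in>supp f. valid_path V A h t p \<and> nstars (snd p) = r)"

text \<open>D_w on a basis path x_1...x_n (0 on non-closed paths, which vanish in V Q);
  the term for position i = k+1 is (-1)^{lambda_i mu_i} x_{i+1}...x_n x_1...x_{i-1},
  a path with head t(w).\<close>
definition Dpath :: "('a \<Rightarrow> 'v) \<Rightarrow> ('a \<Rightarrow> 'v) \<Rightarrow> 'a darr \<Rightarrow> ('v, 'a) qpath
    \<Rightarrow> ('v, 'a) qelt" where
  "Dpath h t w p = (if \<not> closed_path h t p then 0 else
     (\<Sum>k\<in>{k. k < length (snd p) \<and> snd p ! k = w}.
        scale ((-1) ^ (nstars (drop (Suc k) (snd p)) * nstars (take (Suc k) (snd p))))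
          (single (dt h t w, drop (Suc k) (snd p) @ take k (snd p)))))"

text \<open>the bracket of two basis paths u in V^r, v in V^s (only arrows occurring in u or v
  can contribute to the sum over a in Q)\<close>
definition bracket_basis :: "'a set \<Rightarrow> ('a \<Rightarrow> 'v) \<Rightarrow> ('a \<Rightarrow> 'v)
    \<Rightarrow> ('v, 'a) qpath \<Rightarrow> ('v, 'a) qpath \<Rightarrow> ('v, 'a) qelt" where
  "bracket_basis A h t u v =
     (let r = nstars (snd u); s = nstars (snd v) in
      \<Sum>a\<in>A \<inter> base ` (set (snd u) \<union> set (snd v)).
        emul h t (Dpath h t (Star a) u) (Dpath h t (Arr a) v)
        - scale (if even ((int r - 1) * (int s - 1)) then 1 else -1)
            (emul h t (Dpath h t (Star a) v) (Dpath h t (Arr a) u)))"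

text \<open>the bracket [-,-]_V, extended bilinearly (computed on representatives)\<close>
definition vbracket :: "'a set \<Rightarrow> ('a \<Rightarrow> 'v) \<Rightarrow> ('a \<Rightarrow> 'v)
    \<Rightarrow> ('v, 'a) qelt \<Rightarrow> ('v, 'a) qelt \<Rightarrow> ('v, 'a) qelt" where
  "vbracket A h t f g = (\<Sum>u\<in>supp f. \<Sum>v\<in>supp g. scale (f u * g v) (bracket_basis A h t u v))"

definition poisson :: "'v set \<Rightarrow> 'a set \<Rightarrow> ('a \<Rightarrow> 'v) \<Rightarrow> ('a \<Rightarrow> 'v)
    \<Rightarrow> ('v, 'a) qelt \<Rightarrow> bool" where
  "poisson V A h t \<Pi> \<longleftrightarrow> in_CQbar V A h t 2 \<Pi> \<and> veq V A h t (vbracket A h t \<Pi> \<Pi>) 0"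

definition star_path :: "('a \<Rightarrow> 'v) \<Rightarrow> 'a \<Rightarrow> ('v, 'a) qpath" where
  "star_path t a = (t a, [Star a])"

definition homogeneous :: "'v set \<Rightarrow> 'a set \<Rightarrow> ('a \<Rightarrow> 'v) \<Rightarrow> ('a \<Rightarrow> 'v) \<Rightarrow> nat
    \<Rightarrow> ('v, 'a) qelt \<Rightarrow> bool" where
  "homogeneous V A h t p f \<longleftrightarrow>
    (\<exists>ts :: (complex \<times> ('v, 'a) qpath \<times> 'a \<times> ('v, 'a) qpath \<times> 'a) list.
       (\<forall>(c, P, a, R, b)\<in>set ts. Q_path V A h t P \<and> Q_path V A h t R \<and> a \<in> A \<and> b \<in> A
          \<and> (\<forall>q. omul h t (pmul h t P (star_path t a)) (pmul h t R (star_path t b)) = Some q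
                  \<and> closed_path h t q \<longrightarrow> length (snd q) = p + 2))
     \<and> veq V A h t f
         (\<Sum>(c, P, a, R, b)\<leftarrow>ts.
            scale c (of_popt (omul h t (pmul h t P (star_path t a)) (pmul h t R (star_path t b)))
                   - of_popt (omul h t (pmul h t R (star_path t b)) (pmul h t P (star_path t a))))))"

end

theory Submission imports Defs begin

text \<open>
  Every relation \<open>PR - (-1)^{pr} RP\<close> is homogeneous for the length of paths, so the relation span
  is graded by length, and \<open>D\<^sub>w\<close> shortens paths by one letter. Hence the bracket of two
  elements concentrated (on closed paths, the only ones the bracket sees) in lengths \<open>l\<^sub>1\<close> and
  \<open>l\<^sub>2\<close> is concentrated in length \<open>l\<^sub>1 + l\<^sub>2 - 2\<close>. A homogeneous element of degree \<open>p\<close>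
  is concentrated in length \<open>p + 2\<close>, and the bracket is symmetric on bivectors, so
  \<open>[\<Pi>,\<Pi>] = [\<Pi>\<^sub>1,\<Pi>\<^sub>1] + 2[\<Pi>\<^sub>1,\<Pi>\<^sub>2] + [\<Pi>\<^sub>2,\<Pi>\<^sub>2]\<close> has its three summands in the
  distinct lengths \<open>2p\<^sub>1 + 2\<close>, \<open>p\<^sub>1 + p\<^sub>2 + 2\<close>, \<open>2p\<^sub>2 + 2\<close>. As \<open>[\<Pi>,\<Pi>]\<close> lies in the graded
  relation span, so does each summand.

  Since the bracket is computed on representatives, one also needs that it kills relations;
  this holds because \<open>D\<^sub>w\<close> is invariant, up to the Koszul sign, under cyclic rotation of
  closed paths.
\<close>

lemma sum_fun_apply: "(sum F S) q = (\<Sum>x\<in>S. F x q)"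
  by (induction S rule: infinite_finite_induct) auto

lemma scale_apply [simp]: "scale c f q = c * f q"
  by (simp add: scale_def)

lemma scale_one [simp]: "scale 1 f = f"
  by (rule ext) simp

lemma scale_zero [simp]: "scale c 0 = 0"
  by (rule ext) simp

lemma scale_zero_left [simp]: "scale 0 f = 0"
  by (rule ext) simp

lemma scale_sum: "scale c (sum F S) = (\<Sum>x\<in>S. scale c (F x))"
  by (rule ext) (simp add: sum_fun_apply sum_distrib_left)

lemma scale_add: "scale c (f + g) = scale c f + scale c g"
  by (rule ext) (simp add: algebra_simps)

lemma scale_diff: "scale c (f - g) = scale c f - scale c g"
  by (rule ext) (simp add: algebra_simps)

lemma scale_scale: "scale c (scale d f) = scale (c * d) f"
  by (rule ext) simp

lemma scale_commute: "scale c (scale d f) = scale d (scale c f)"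
  by (simp add: scale_scale mult.commute)

lemma scale_minus_one: "scale (-1) f = - f"
  by (rule ext) simp

lemma supp_zero [simp]: "supp 0 = {}"
  by (auto simp: supp_def)

lemma supp_scale_nonzero: "c \<noteq> 0 \<Longrightarrow> supp (scale c f) = supp f"
  by (auto simp: supp_def)

lemma supp_single: "supp (single p) = {p}"
  by (auto simp: supp_def single_def)

lemma finite_supp_scale: "finite (supp f) \<Longrightarrow> finite (supp (scale c f))"
  by (rule finite_subset[of _ "supp f"]) (auto simp: supp_def)

lemma finite_supp_add: "finite (supp f) \<Longrightarrow> finite (supp g) \<Longrightarrow> finite (supp (f + g))"
  by (rule finite_subset[of _ "supp f \<union> supp g"]) (auto simp: supp_def)

lemma finite_supp_diff: "finite (supp f) \<Longrightarrow> finite (supp g) \<Longrightarrow> finite (supp (f - g))"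
  by (rule finite_subset[of _ "supp f \<union> supp g"]) (auto simp: supp_def)

lemma finite_supp_of_popt: "finite (supp (of_popt P))"
  by (cases P) (auto simp: of_popt_def supp_single)

lemma finite_supp_grel: "finite (supp (grel h t P R))"
  unfolding grel_def by (intro finite_supp_diff finite_supp_scale finite_supp_of_popt)

lemma finite_supp_sum_list:
  "(\<And>x. x \<in> set xs \<Longrightarrow> finite (supp (F x))) \<Longrightarrow> finite (supp (sum_list (map F xs)))"
  by (induction xs) (auto intro: finite_supp_add)

definition linext :: "(('v, 'a) qpath \<Rightarrow> ('v, 'a) qelt) \<Rightarrow> ('v, 'a) qelt \<Rightarrow> ('v, 'a) qelt" where
  "linext K f = (\<Sum>u\<in>supp f. scale (f u) (K u))"

lemma linext_superset:
  "finite S \<Longrightarrow> supp f \<subseteq> S \<Longrightarrow> linext K f = (\<Sum>u\<in>S. scale (f u) (K u))"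
  unfolding linext_def by (rule sum.mono_neutral_left) (auto simp: supp_def)

lemma linext_zero [simp]: "linext K 0 = 0"
  by (simp add: linext_def)

lemma linext_single: "linext K (single p) = K p"
  by (simp add: linext_def supp_single) (simp add: single_def)

lemma linext_of_popt: "linext K (of_popt P) = (case P of None \<Rightarrow> 0 | Some p \<Rightarrow> K p)"
  by (cases P) (auto simp: of_popt_def linext_single)

lemma linext_scale: "linext K (scale c f) = scale c (linext K f)"
  by (cases "c = 0") (simp_all add: linext_def supp_def[of "scale 0 f"]
      supp_scale_nonzero scale_sum scale_scale)

lemma linext_add:
  assumes "finite (supp f)" "finite (supp g)"
  shows "linext K (f + g) = linext K f + linext K g"
proof -
  let ?S = "supp f \<union> supp g"
  have "linext K (f + g) = (\<Sum>u\<in>?S. scale ((f + g) u) (K u))"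
    using assms by (intro linext_superset) (auto simp: supp_def)
  also have "\<dots> = (\<Sum>u\<in>?S. scale (f u) (K u)) + (\<Sum>u\<in>?S. scale (g u) (K u))"
    by (simp add: sum.distrib[symmetric]) (intro sum.cong refl ext, simp add: algebra_simps)
  also have "\<dots> = linext K f + linext K g"
    using assms linext_superset[of ?S f K] linext_superset[of ?S g K] by auto
  finally show ?thesis .
qed

lemma linext_diff:
  assumes "finite (supp f)" "finite (supp g)"
  shows "linext K (f - g) = linext K f - linext K g"
proof -
  have "f - g = f + scale (-1) g" by (rule ext) simp
  then have "linext K (f - g) = linext K f + scale (-1) (linext K g)"
    using assms linext_add[OF assms(1) finite_supp_scale[OF assms(2)]] by (simp only: linext_scale)
  then show ?thesis by (simp add: scale_minus_one)
qed

lemma linext_add_map: "linext (\<lambda>u. K1 u + K2 u) f = linext K1 f + linext K2 f"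
  by (simp add: linext_def scale_add sum.distrib)

lemma vbracket_eq_linext: "vbracket A h t f g = linext (\<lambda>u. linext (bracket_basis A h t u) g) f"
  unfolding vbracket_def linext_def scale_sum scale_scale by (simp add: mult.commute)

lemma finite_supp_relspan:
  fixes x :: "('v, 'a) qelt"
  assumes "x \<in> relspan V A h t" shows "finite (supp x)"
proof (rule relspan.induct[OF assms])
  fix P R c and y :: "('v, 'a) qelt" assume "finite (supp y)"
  then show "finite (supp (y + scale c (grel h t P R)))"
    by (intro finite_supp_add finite_supp_scale finite_supp_grel)
qed (simp only: supp_zero finite.emptyI)

lemma relspan_scale:
  assumes "x \<in> relspan V A h t" shows "scale d x \<in> relspan V A h t"
proof (rule relspan.induct[OF assms])
  fix P R y c
  assume "valid_path V A h t P" "valid_path V A h t R" "scale d y \<in> relspan V A h t"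
  then have "scale d y + scale (d * c) (grel h t P R) \<in> relspan V A h t"
    by (intro relspan.step)
  then show "scale d (y + scale c (grel h t P R)) \<in> relspan V A h t"
    by (simp add: scale_add scale_scale)
qed (simp only: scale_zero relspan.zero)

lemma relspan_half: "x + x \<in> relspan V A h t \<Longrightarrow> x \<in> relspan V A h t"
  using relspan_scale[of "x + x" V A h t "1/2"] by (simp add: scale_def)

definition length_part :: "nat \<Rightarrow> ('v, 'a) qelt \<Rightarrow> ('v, 'a) qelt" where
  "length_part l f = (\<lambda>q. if length (snd q) = l then f q else 0)"

lemma length_part_add: "length_part l (f + g) = length_part l f + length_part l g"
  by (rule ext) (simp add: length_part_def)

lemma length_part_scale: "length_part l (scale c f) = scale c (length_part l f)"
  by (rule ext) (simp add: length_part_def)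

lemma length_part_grel:
  "length_part l (grel h t P R) = (if length (snd P) + length (snd R) = l then grel h t P R else 0)"
  by (rule ext) (auto simp: length_part_def grel_def of_popt_def pmul_def single_def)

lemma relspan_length_part:
  assumes "x \<in> relspan V A h t" shows "length_part l x \<in> relspan V A h t"
proof (rule relspan.induct[OF assms])
  have "length_part l 0 = 0" by (rule ext) (simp add: length_part_def)
  then show "length_part l 0 \<in> relspan V A h t" using relspan.zero by metis
next
  fix P R y c
  assume "valid_path V A h t P" "valid_path V A h t R" "length_part l y \<in> relspan V A h t"
  then show "length_part l (y + scale c (grel h t P R)) \<in> relspan V A h t"
    by (cases "length (snd P) + length (snd R) = l")
       (simp_all add: length_part_add length_part_scale length_part_grel relspan.step)
qed

section \<open>Maps compatible with graded cyclic rotation kill the relations\<close>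

lemma ptail_append: "ptail h t P = fst R \<Longrightarrow> ptail h t (fst P, snd P @ snd R) = ptail h t R"
  by (cases "snd R = []"; cases "snd P = []") (auto simp: ptail_def)

lemma closed_path_append:
  "ptail h t P = fst R \<Longrightarrow> ptail h t R = fst P \<Longrightarrow> closed_path h t (fst P, snd P @ snd R)"
  by (simp add: closed_path_def ptail_append)

definition graded_cyclic :: "('a \<Rightarrow> 'v) \<Rightarrow> ('a \<Rightarrow> 'v) \<Rightarrow> (('v, 'a) qpath \<Rightarrow> ('v, 'a) qelt) \<Rightarrow> bool" where
  "graded_cyclic h t K \<longleftrightarrow> (\<forall>u. \<not> closed_path h t u \<longrightarrow> K u = 0) \<and>
     (\<forall>P R. ptail h t P = fst R \<and> ptail h t R = fst P \<longrightarrow>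
        K (fst P, snd P @ snd R)
          = scale ((-1) ^ (nstars (snd P) * nstars (snd R))) (K (fst R, snd R @ snd P)))"

lemma graded_cyclicI:
  assumes "\<And>u. \<not> closed_path h t u \<Longrightarrow> K u = 0"
    and "\<And>P R. ptail h t P = fst R \<Longrightarrow> ptail h t R = fst P \<Longrightarrow>
      K (fst P, snd P @ snd R) = scale ((-1) ^ (nstars (snd P) * nstars (snd R))) (K (fst R, snd R @ snd P))"
  shows "graded_cyclic h t K"
  using assms unfolding graded_cyclic_def by blast

lemma graded_cyclicD:
  assumes "graded_cyclic h t K"
  shows "\<not> closed_path h t u \<Longrightarrow> K u = 0"
    and "ptail h t P = fst R \<Longrightarrow> ptail h t R = fst P \<Longrightarrow>
      K (fst P, snd P @ snd R) = scale ((-1) ^ (nstars (snd P) * nstars (snd R))) (K (fst R, snd R @ snd P))"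
  using assms unfolding graded_cyclic_def by blast+

lemma linext_grel:
  assumes K: "graded_cyclic h t K"
  shows "linext K (grel h t P R) = 0"
proof -
  let ?s = "(-1::complex) ^ (nstars (snd P) * nstars (snd R))"
  have "linext K (grel h t P R)
      = linext K (of_popt (pmul h t P R)) - scale ?s (linext K (of_popt (pmul h t R P)))"
    unfolding grel_def
    by (simp add: linext_diff finite_supp_of_popt finite_supp_scale linext_scale)
  also have "\<dots> = 0"
  proof (cases "ptail h t P = fst R"; cases "ptail h t R = fst P")
    assume "ptail h t P = fst R" "ptail h t R = fst P"
    then show ?thesis using graded_cyclicD(2)[OF K, of P R] by (simp add: linext_of_popt pmul_def)
  next
    assume "ptail h t P = fst R" "ptail h t R \<noteq> fst P"
    then show ?thesis using graded_cyclicD(1)[OF K]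
      by (simp add: linext_of_popt pmul_def closed_path_def ptail_append)
  next
    assume "ptail h t P \<noteq> fst R" "ptail h t R = fst P"
    then show ?thesis using graded_cyclicD(1)[OF K]
      by (simp add: linext_of_popt pmul_def closed_path_def ptail_append)
  qed (simp add: linext_of_popt pmul_def)
  finally show ?thesis .
qed

lemma linext_relspan:
  assumes "x \<in> relspan V A h t" "graded_cyclic h t K" shows "linext K x = 0"
proof (rule relspan.induct[OF assms(1)])
  fix P R y c assume "y \<in> relspan V A h t" "linext K y = 0"
  then show "linext K (y + scale c (grel h t P R)) = 0"
    using assms(2) by (simp add: linext_add finite_supp_relspan finite_supp_scale
        finite_supp_grel linext_scale linext_grel)
qed (rule linext_zero)

lemma graded_cyclic_linext:
  assumes "\<And>v. graded_cyclic h t (\<lambda>u. B u v)"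
  shows "graded_cyclic h t (\<lambda>u. linext (B u) g)"
proof (rule graded_cyclicI)
  fix u assume "\<not> closed_path h t u"
  then show "linext (B u) g = 0" using graded_cyclicD(1)[OF assms] by (simp add: linext_def)
next
  fix P R assume "ptail h t P = fst R" "ptail h t R = fst P"
  then show "linext (B (fst P, snd P @ snd R)) g
      = scale ((-1) ^ (nstars (snd P) * nstars (snd R))) (linext (B (fst R, snd R @ snd P)) g)"
    using graded_cyclicD(2)[OF assms, where P = P and R = R]
    by (simp add: linext_def scale_sum scale_commute)
qed

lemma nstars_append [simp]: "nstars (xs @ ys) = nstars xs + nstars ys"
  by (simp add: nstars_def)

definition cut_rotation :: "'x list \<Rightarrow> nat \<Rightarrow> 'x list" where
  "cut_rotation xs k = drop (Suc k) xs @ take k xs"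

definition cut_sign :: "'a darr list \<Rightarrow> nat \<Rightarrow> complex" where
  "cut_sign xs k = (-1) ^ (nstars (drop (Suc k) xs) * nstars (take (Suc k) xs))"

lemma Dpath_closed:
  "closed_path h t p \<Longrightarrow> Dpath h t w p = (\<Sum>k\<in>{k. k < length (snd p) \<and> snd p ! k = w}.
     scale (cut_sign (snd p) k) (single (dt h t w, cut_rotation (snd p) k)))"
  by (simp add: Dpath_def cut_sign_def cut_rotation_def)

lemma Dpath_not_closed: "\<not> closed_path h t p \<Longrightarrow> Dpath h t w p = 0"
  by (simp add: Dpath_def)

lemma minus_one_power_eq: "even (m + n) \<Longrightarrow> (-1::'a::ring_1) ^ m = (-1) ^ n"
  by (auto simp: minus_one_power_iff)

text \<open>Cutting \<open>ps @ rs\<close> and \<open>rs @ ps\<close> at the same letter gives the same word; with \<open>p\<close>, \<open>r\<close>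
  the numbers of stars in \<open>ps\<close>, \<open>rs\<close>, the sign exponents differ by \<open>pr\<close> plus an even number.\<close>

lemma cut_rotation_in_right:
  assumes "j < length rs"
  shows "(ps @ rs) ! (j + length ps) = (rs @ ps) ! j"
    and "cut_rotation (ps @ rs) (j + length ps) = cut_rotation (rs @ ps) j"
    and "cut_sign (ps @ rs) (j + length ps)
         = (-1) ^ (nstars ps * nstars rs) * cut_sign (rs @ ps) j"
proof -
  let ?a = "nstars (take (Suc j) rs)" and ?b = "nstars (drop (Suc j) rs)" and ?p = "nstars ps"
  have rs: "nstars rs = ?a + ?b"
    by (metis append_take_drop_id nstars_append)
  have "?b * (?p + ?a) + (?p * (?a + ?b) + (?b + ?p) * ?a) = 2 * (?b * ?p + ?b * ?a + ?p * ?a)"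
    by (simp add: algebra_simps)
  then have "(-1::complex) ^ (?b * (?p + ?a)) = (-1) ^ (?p * (?a + ?b) + (?b + ?p) * ?a)"
    by (intro minus_one_power_eq) simp
  then show "cut_sign (ps @ rs) (j + length ps)
      = (-1) ^ (nstars ps * nstars rs) * cut_sign (rs @ ps) j"
    using assms rs by (simp add: cut_sign_def power_add)
  show "(ps @ rs) ! (j + length ps) = (rs @ ps) ! j"
    using assms by (simp add: nth_append)
  show "cut_rotation (ps @ rs) (j + length ps) = cut_rotation (rs @ ps) j"
    using assms by (simp add: cut_rotation_def)
qed

lemma cut_rotation_in_left:
  assumes "k < length ps"
  shows "(ps @ rs) ! k = (rs @ ps) ! (k + length rs)"
    and "cut_rotation (ps @ rs) k = cut_rotation (rs @ ps) (k + length rs)"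
    and "cut_sign (ps @ rs) k = (-1) ^ (nstars ps * nstars rs) * cut_sign (rs @ ps) (k + length rs)"
proof -
  let ?a = "nstars (take (Suc k) ps)" and ?b = "nstars (drop (Suc k) ps)" and ?r = "nstars rs"
  have ps: "nstars ps = ?a + ?b"
    by (metis append_take_drop_id nstars_append)
  have "(?b + ?r) * ?a + ((?a + ?b) * ?r + ?b * (?r + ?a)) = 2 * (?b * ?a + ?r * ?a + ?b * ?r)"
    by (simp add: algebra_simps)
  then have "(-1::complex) ^ ((?b + ?r) * ?a) = (-1) ^ ((?a + ?b) * ?r + ?b * (?r + ?a))"
    by (intro minus_one_power_eq) simp
  then show "cut_sign (ps @ rs) k
      = (-1) ^ (nstars ps * nstars rs) * cut_sign (rs @ ps) (k + length rs)"
    using assms ps by (simp add: cut_sign_def power_add)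
  show "(ps @ rs) ! k = (rs @ ps) ! (k + length rs)"
    using assms by (simp add: nth_append)
  show "cut_rotation (ps @ rs) k = cut_rotation (rs @ ps) (k + length rs)"
    using assms by (simp add: cut_rotation_def)
qed

definition rotate_index :: "nat \<Rightarrow> nat \<Rightarrow> nat \<Rightarrow> nat" where
  "rotate_index m r j = (if j < r then j + m else j - r)"

lemma cut_rotate_index:
  fixes ps rs :: "'a darr list"
  assumes "j < length (rs @ ps)"
  defines "k \<equiv> rotate_index (length ps) (length rs) j"
  shows "k < length (ps @ rs) \<and> rotate_index (length rs) (length ps) k = j
    \<and> (ps @ rs) ! k = (rs @ ps) ! j \<and> cut_rotation (ps @ rs) k = cut_rotation (rs @ ps) j
    \<and> cut_sign (ps @ rs) k = (-1) ^ (nstars ps * nstars rs) * cut_sign (rs @ ps) j"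
proof (cases "j < length rs")
  case True
  then show ?thesis
    using cut_rotation_in_right[OF True, of ps] by (simp add: k_def rotate_index_def)
next
  case False
  then obtain i where "j = i + length rs" and i: "i < length ps"
    using assms(1) by (metis add.commute add_diff_inverse_nat add_less_cancel_left length_append)
  then show ?thesis
    using cut_rotation_in_left[OF i, of rs] by (simp add: k_def rotate_index_def)
qed

lemma Dpath_rotate:
  fixes ps rs :: "'a darr list"
  assumes "closed_path h t (v1, ps @ rs)" and "closed_path h t (v2, rs @ ps)"
  shows "Dpath h t w (v1, ps @ rs) = scale ((-1) ^ (nstars ps * nstars rs)) (Dpath h t w (v2, rs @ ps))"
proof -
  let ?s = "(-1::complex) ^ (nstars ps * nstars rs)"
  let ?term = "\<lambda>xs k. scale (cut_sign xs k) (single (dt h t w, cut_rotation xs k))"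
  have "(\<Sum>j\<in>{j. j < length (rs @ ps) \<and> (rs @ ps) ! j = w}. scale ?s (?term (rs @ ps) j))
      = (\<Sum>k\<in>{k. k < length (ps @ rs) \<and> (ps @ rs) ! k = w}. ?term (ps @ rs) k)"
  proof (rule sum.reindex_bij_witness[where j = "rotate_index (length ps) (length rs)"
        and i = "rotate_index (length rs) (length ps)"])
    fix j assume "j \<in> {j. j < length (rs @ ps) \<and> (rs @ ps) ! j = w}"
    then show "rotate_index (length rs) (length ps) (rotate_index (length ps) (length rs) j) = j"
      and "rotate_index (length ps) (length rs) j \<in> {k. k < length (ps @ rs) \<and> (ps @ rs) ! k = w}"
      and "?term (ps @ rs) (rotate_index (length ps) (length rs) j) = scale ?s (?term (rs @ ps) j)"
      using cut_rotate_index[of j rs ps] by (auto simp: scale_scale)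
  next
    fix k assume "k \<in> {k. k < length (ps @ rs) \<and> (ps @ rs) ! k = w}"
    then show "rotate_index (length ps) (length rs) (rotate_index (length rs) (length ps) k) = k"
      and "rotate_index (length rs) (length ps) k \<in> {j. j < length (rs @ ps) \<and> (rs @ ps) ! j = w}"
      using cut_rotate_index[of k ps rs] by auto
  qed
  then show ?thesis using assms by (simp add: Dpath_closed scale_sum)
qed

lemma graded_cyclic_Dpath: "graded_cyclic h t (Dpath h t w)"
proof (rule graded_cyclicI)
  fix P R assume PR: "ptail h t P = fst R" "ptail h t R = fst P"
  show "Dpath h t w (fst P, snd P @ snd R)
      = scale ((-1) ^ (nstars (snd P) * nstars (snd R))) (Dpath h t w (fst R, snd R @ snd P))"
    by (rule Dpath_rotate[OF closed_path_append[OF PR] closed_path_append[OF PR(2,1)]])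
qed (rule Dpath_not_closed)

section \<open>The bracket descends to \<open>\<V>Q\<close>\<close>

lemma emul_zero_left [simp]: "emul h t 0 g = 0"
  by (simp add: emul_def)

lemma emul_zero_right [simp]: "emul h t f 0 = 0"
  by (simp add: emul_def)

lemma emul_scale_left: "emul h t (scale c f) g = scale c (emul h t f g)"
  by (cases "c = 0") (simp_all add: emul_def supp_def[of "scale 0 f"] supp_scale_nonzero
      scale_sum scale_scale mult.assoc)

lemma emul_scale_right: "emul h t f (scale c g) = scale c (emul h t f g)"
  by (cases "c = 0") (simp_all add: emul_def supp_def[of "scale 0 g"] supp_scale_nonzero
      scale_sum scale_scale mult.assoc mult.left_commute)

lemma bracket_basis_not_closed:
  "\<not> closed_path h t u \<or> \<not> closed_path h t v \<Longrightarrow> bracket_basis A h t u v = 0"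
  by (auto simp: bracket_basis_def Dpath_not_closed Let_def)

lemma bracket_basis_commute:
  "nstars (snd u) = 2 \<Longrightarrow> nstars (snd v) = 2 \<Longrightarrow> bracket_basis A h t v u = bracket_basis A h t u v"
  unfolding bracket_basis_def Let_def by (simp add: scale_minus_one Un_commute add.commute)

text \<open>Both arguments enter the bracket only through \<open>D\<^sub>w\<close>, its letters and its number of stars,
  all of which are compatible with rotation.\<close>

lemma graded_cyclic_bracket_basis_left: "graded_cyclic h t (\<lambda>u. bracket_basis A h t u v)"
proof (rule graded_cyclicI)
  fix P R assume PR: "ptail h t P = fst R" "ptail h t R = fst P"
  let ?s = "(-1::complex) ^ (nstars (snd P) * nstars (snd R))"
  have "set (snd P @ snd R) = set (snd R @ snd P)" by auto
  then show "bracket_basis A h t (fst P, snd P @ snd R) v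
      = scale ?s (bracket_basis A h t (fst R, snd R @ snd P) v)"
    unfolding bracket_basis_def Let_def snd_conv
    using graded_cyclicD(2)[OF graded_cyclic_Dpath PR]
    by (simp add: scale_sum scale_diff emul_scale_left emul_scale_right scale_commute[of ?s] add.commute)
qed (simp add: bracket_basis_not_closed)

lemma graded_cyclic_bracket_basis_right: "graded_cyclic h t (bracket_basis A h t u)"
proof (rule graded_cyclicI)
  fix P R assume PR: "ptail h t P = fst R" "ptail h t R = fst P"
  let ?s = "(-1::complex) ^ (nstars (snd P) * nstars (snd R))"
  have "set (snd P @ snd R) = set (snd R @ snd P)" by auto
  then show "bracket_basis A h t u (fst P, snd P @ snd R)
      = scale ?s (bracket_basis A h t u (fst R, snd R @ snd P))"
    unfolding bracket_basis_def Let_def snd_conv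
    using graded_cyclicD(2)[OF graded_cyclic_Dpath PR]
    by (simp add: scale_sum scale_diff emul_scale_left emul_scale_right scale_commute[of ?s] add.commute)
qed (simp add: bracket_basis_not_closed)

lemma vbracket_relspan_left: "d \<in> relspan V A h t \<Longrightarrow> vbracket A h t d g = 0"
  unfolding vbracket_eq_linext
  by (rule linext_relspan) (auto intro: graded_cyclic_linext graded_cyclic_bracket_basis_left)

lemma vbracket_relspan_right:
  assumes "d \<in> relspan V A h t" shows "vbracket A h t f d = 0"
proof -
  have "(\<lambda>u. linext (bracket_basis A h t u) d) = (\<lambda>u. 0)"
    using linext_relspan[OF assms graded_cyclic_bracket_basis_right] by simp
  then show ?thesis by (simp add: vbracket_eq_linext linext_def)
qed

lemma vbracket_add_left:
  "finite (supp f1) \<Longrightarrow> finite (supp f2) \<Longrightarrow>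
   vbracket A h t (f1 + f2) g = vbracket A h t f1 g + vbracket A h t f2 g"
  unfolding vbracket_eq_linext by (rule linext_add)

lemma vbracket_add_right:
  "finite (supp g1) \<Longrightarrow> finite (supp g2) \<Longrightarrow>
   vbracket A h t f (g1 + g2) = vbracket A h t f g1 + vbracket A h t f g2"
  unfolding vbracket_eq_linext by (simp add: linext_add linext_add_map)

lemma vbracket_veq:
  assumes "finite (supp f)" "finite (supp f')" "finite (supp g)" "finite (supp g')"
    and "veq V A h t f f'" "veq V A h t g g'"
  shows "vbracket A h t f g = vbracket A h t f' g'"
proof -
  have rel: "f - f' \<in> relspan V A h t" "g - g' \<in> relspan V A h t"
    using assms(5,6) by (simp_all add: veq_def)
  have fin: "finite (supp (f - f'))" "finite (supp (g - g'))"
    using assms(1-4) by (simp_all add: finite_supp_diff)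
  have "vbracket A h t f g = vbracket A h t f' g + vbracket A h t (f - f') g"
    using vbracket_add_left[of f' "f - f'" A h t g] assms fin by simp
  also have "\<dots> = vbracket A h t f' (g' + (g - g'))"
    using vbracket_relspan_left[OF rel(1)] by simp
  also have "\<dots> = vbracket A h t f' g'"
    using vbracket_add_right[of g' "g - g'" A h t f'] vbracket_relspan_right[OF rel(2)] assms fin
    by simp
  finally show ?thesis .
qed

lemma vbracket_commute:
  assumes "\<And>u. u \<in> supp f \<Longrightarrow> nstars (snd u) = 2" "\<And>v. v \<in> supp g \<Longrightarrow> nstars (snd v) = 2"
  shows "vbracket A h t g f = vbracket A h t f g"
  unfolding vbracket_def
  by (subst sum.swap, intro sum.cong refl) (simp add: assms bracket_basis_commute mult.commute)

lemma vbracket_add_square: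
  assumes "finite (supp f)" "finite (supp g)" "vbracket A h t g f = vbracket A h t f g"
  shows "vbracket A h t (f + g) (f + g)
    = vbracket A h t f f + (vbracket A h t f g + vbracket A h t f g) + vbracket A h t g g"
  using assms by (simp add: vbracket_add_left vbracket_add_right finite_supp_add add_ac)

section \<open>Length grading of the bracket\<close>

definition length_supported :: "nat \<Rightarrow> ('v, 'a) qelt \<Rightarrow> bool" where
  "length_supported l f \<longleftrightarrow> (\<forall>q. f q \<noteq> 0 \<longrightarrow> length (snd q) = l)"

text \<open>Only closed paths matter for the bracket, and only on them does homogeneity constrain the
  length.\<close>

definition closed_length_supported :: "('a \<Rightarrow> 'v) \<Rightarrow> ('a \<Rightarrow> 'v) \<Rightarrow> nat \<Rightarrow> ('v, 'a) qelt \<Rightarrow> bool" where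
  "closed_length_supported h t l f \<longleftrightarrow> (\<forall>q. f q \<noteq> 0 \<longrightarrow> closed_path h t q \<longrightarrow> length (snd q) = l)"

lemma length_supported_sum:
  "(\<And>x. x \<in> S \<Longrightarrow> length_supported l (F x)) \<Longrightarrow> length_supported l (sum F S)"
  unfolding length_supported_def sum_fun_apply by (metis (mono_tags, lifting) sum.neutral)

lemma length_supported_scale: "length_supported l f \<Longrightarrow> length_supported l (scale c f)"
  by (auto simp: length_supported_def)

lemma length_supported_add:
  "length_supported l f \<Longrightarrow> length_supported l g \<Longrightarrow> length_supported l (f + g)"
  unfolding length_supported_def by (metis add.right_neutral plus_fun_apply)

lemma length_supported_diff:
  "length_supported l f \<Longrightarrow> length_supported l g \<Longrightarrow> length_supported l (f - g)"
  unfolding length_supported_def by (metis diff_self minus_apply)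

lemma length_part_self: "length_supported l f \<Longrightarrow> length_part l f = f"
  unfolding length_supported_def length_part_def by (intro ext) metis

lemma length_part_other: "length_supported l' f \<Longrightarrow> l' \<noteq> l \<Longrightarrow> length_part l f = 0"
  unfolding length_supported_def length_part_def by (intro ext) (metis zero_fun_apply)

lemma relspan_length_components:
  assumes "f1 + f2 + f3 \<in> relspan V A h t"
    and f: "length_supported l1 f1" "length_supported l2 f2" "length_supported l3 f3"
    and "l1 \<noteq> l2" "l1 \<noteq> l3" "l2 \<noteq> l3"
  shows "f1 \<in> relspan V A h t" "f2 \<in> relspan V A h t" "f3 \<in> relspan V A h t"
proof -
  have "length_part l1 (f1 + f2 + f3) = f1" "length_part l2 (f1 + f2 + f3) = f2"
    "length_part l3 (f1 + f2 + f3) = f3"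
    using assms(5-7) length_part_self[OF f(1)] length_part_self[OF f(2)] length_part_self[OF f(3)]
      length_part_other[OF f(1)] length_part_other[OF f(2)] length_part_other[OF f(3)]
    by (simp_all add: length_part_add)
  then show "f1 \<in> relspan V A h t" "f2 \<in> relspan V A h t" "f3 \<in> relspan V A h t"
    using relspan_length_part[OF assms(1)] by metis+
qed

lemma length_supported_Dpath: "length_supported (length (snd u) - 1) (Dpath h t w u)"
  unfolding Dpath_def length_supported_def
  by (auto simp: sum_fun_apply single_def intro!: sum.neutral)

lemma length_supported_emul:
  "length_supported l1 f \<Longrightarrow> length_supported l2 g \<Longrightarrow> length_supported (l1 + l2) (emul h t f g)"
  unfolding emul_def
  by (intro length_supported_sum length_supported_scale)
     (auto simp: length_supported_def supp_def pmul_def of_popt_def single_def)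

lemma length_supported_bracket_basis:
  "length_supported (length (snd u) - 1 + (length (snd v) - 1)) (bracket_basis A h t u v)"
proof -
  have swapped: "length_supported (length (snd u) - 1 + (length (snd v) - 1))
      (emul h t (Dpath h t w v) (Dpath h t w' u))" for w w'
    using length_supported_emul[OF length_supported_Dpath length_supported_Dpath]
    by (subst add.commute)
  then show ?thesis unfolding bracket_basis_def Let_def
    by (intro length_supported_sum length_supported_diff length_supported_scale
        length_supported_emul length_supported_Dpath swapped)
qed

lemma length_supported_vbracket:
  assumes "closed_length_supported h t l1 f" "closed_length_supported h t l2 g"
  shows "length_supported (l1 - 1 + (l2 - 1)) (vbracket A h t f g)"
  unfolding vbracket_def
proof (intro length_supported_sum length_supported_scale)
  fix u v assume uv: "u \<in> supp f" "v \<in> supp g"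
  show "length_supported (l1 - 1 + (l2 - 1)) (bracket_basis A h t u v)"
  proof (cases "closed_path h t u \<and> closed_path h t v")
    case True
    then have "length (snd u) = l1" "length (snd v) = l2"
      using assms uv unfolding closed_length_supported_def supp_def by blast+
    then show ?thesis using length_supported_bracket_basis[of u v A h t] by simp
  qed (simp add: bracket_basis_not_closed length_supported_def)
qed

lemma closed_length_supported_zero [simp]: "closed_length_supported h t l 0"
  by (simp add: closed_length_supported_def)

lemma closed_length_supported_add:
  "closed_length_supported h t l f \<Longrightarrow> closed_length_supported h t l g
   \<Longrightarrow> closed_length_supported h t l (f + g)"
  unfolding closed_length_supported_def by (metis add.right_neutral plus_fun_apply)

lemma closed_length_supported_diff:
  "closed_length_supported h t l f \<Longrightarrow> closed_length_supported h t l g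
   \<Longrightarrow> closed_length_supported h t l (f - g)"
  unfolding closed_length_supported_def by (metis diff_self minus_apply)

lemma closed_length_supported_scale:
  "closed_length_supported h t l f \<Longrightarrow> closed_length_supported h t l (scale c f)"
  by (auto simp: closed_length_supported_def)

lemma closed_length_supported_of_popt:
  "(\<And>q. X = Some q \<Longrightarrow> closed_path h t q \<Longrightarrow> length (snd q) = l)
   \<Longrightarrow> closed_length_supported h t l (of_popt X)"
  by (cases X) (auto simp: closed_length_supported_def of_popt_def single_def)

lemma closed_length_supported_sum_list:
  "(\<And>x. x \<in> set xs \<Longrightarrow> closed_length_supported h t l (F x))
   \<Longrightarrow> closed_length_supported h t l (sum_list (map F xs))"
  by (induction xs) (auto intro: closed_length_supported_add)

lemma omul_closed_swap:
  assumes "omul h t B C = Some q" "closed_path h t q"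
  shows "\<exists>q'. omul h t C B = Some q' \<and> closed_path h t q' \<and> length (snd q') = length (snd q)"
proof -
  obtain b c where bc: "B = Some b" "C = Some c" "pmul h t b c = Some q"
    using assms(1) by (auto simp: omul_def split: option.splits)
  then have bc_tail: "ptail h t b = fst c" and q: "q = (fst b, snd b @ snd c)"
    by (auto simp: pmul_def split: if_splits)
  then have cb_tail: "ptail h t c = fst b"
    using assms(2) ptail_append[OF bc_tail] by (simp add: closed_path_def)
  then show ?thesis using bc bc_tail q closed_path_append[OF cb_tail bc_tail]
    by (auto simp: omul_def pmul_def)
qed

lemma homogeneous_closed_length_representative:
  fixes h t :: "'a \<Rightarrow> 'v" and f :: "('v, 'a) qelt"
  assumes "homogeneous V A h t p f"
  shows "\<exists>E. finite (supp E) \<and> closed_length_supported h t (p + 2) E \<and> veq V A h t f E"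
proof -
  let ?X = "\<lambda>P a R b. omul h t (pmul h t P (star_path t a)) (pmul h t R (star_path t b))"
  obtain ts :: "(complex \<times> ('v, 'a) qpath \<times> 'a \<times> ('v, 'a) qpath \<times> 'a) list" where
    ts: "\<forall>(c, P, a, R, b)\<in>set ts. Q_path V A h t P \<and> Q_path V A h t R \<and> a \<in> A \<and> b \<in> A
      \<and> (\<forall>q. ?X P a R b = Some q \<and> closed_path h t q \<longrightarrow> length (snd q) = p + 2)"
    and f: "veq V A h t f (\<Sum>(c, P, a, R, b)\<leftarrow>ts.
            scale c (of_popt (?X P a R b) - of_popt (?X R b P a)))"
    using assms unfolding homogeneous_def by blast
  let ?F = "\<lambda>(c, P, a, R, b). scale c (of_popt (?X P a R b) - of_popt (?X R b P a))"
  have "closed_length_supported h t (p + 2) (?F x)" if "x \<in> set ts" for x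
  proof -
    obtain c P a R b where x: "x = (c, P, a, R, b)" by (cases x) auto
    have "\<And>q. ?X P a R b = Some q \<Longrightarrow> closed_path h t q \<Longrightarrow> length (snd q) = p + 2"
      using ts that x by fastforce
    moreover then have "\<And>q. ?X R b P a = Some q \<Longrightarrow> closed_path h t q \<Longrightarrow> length (snd q) = p + 2"
      using omul_closed_swap by metis
    ultimately show ?thesis unfolding x
      by (auto intro!: closed_length_supported_scale closed_length_supported_diff
          closed_length_supported_of_popt)
  qed
  moreover have "finite (supp (sum_list (map ?F ts)))"
    by (rule finite_supp_sum_list)
       (auto intro!: finite_supp_scale finite_supp_diff finite_supp_of_popt)
  ultimately show ?thesis using f closed_length_supported_sum_list by blast
qed

lemma vbracket_homogeneous_length_supported:
  assumes "homogeneous V A h t p f" "homogeneous V A h t q g"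
    and "finite (supp f)" "finite (supp g)"
  shows "length_supported (p + q + 2) (vbracket A h t f g)"
proof -
  obtain E where E: "finite (supp E)" "closed_length_supported h t (p + 2) E" "veq V A h t f E"
    using homogeneous_closed_length_representative[OF assms(1)] by blast
  obtain F where F: "finite (supp F)" "closed_length_supported h t (q + 2) F" "veq V A h t g F"
    using homogeneous_closed_length_representative[OF assms(2)] by blast
  have "vbracket A h t f g = vbracket A h t E F"
    using E F assms(3,4) by (intro vbracket_veq)
  then show ?thesis
    using length_supported_vbracket[OF E(2) F(2), of A] by simp
qed

theorem mainTheorem4:
  fixes V :: "'v set" and A :: "'a set" and h t :: "'a \<Rightarrow> 'v"
    and \<Pi> \<Pi>1 \<Pi>2 :: "('v, 'a) qelt" and p1 p2 :: nat
  assumes "quiver V A h t"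
    and "poisson V A h t \<Pi>"
    and "in_CQbar V A h t 2 \<Pi>1" and "in_CQbar V A h t 2 \<Pi>2"
    and "veq V A h t \<Pi> (\<Pi>1 + \<Pi>2)"
    and "homogeneous V A h t p1 \<Pi>1" and "homogeneous V A h t p2 \<Pi>2"
    and "p1 \<noteq> p2"
  shows "veq V A h t (vbracket A h t \<Pi>1 \<Pi>1) 0 \<and> veq V A h t (vbracket A h t \<Pi>1 \<Pi>2) 0
       \<and> veq V A h t (vbracket A h t \<Pi>2 \<Pi>1) 0 \<and> veq V A h t (vbracket A h t \<Pi>2 \<Pi>2) 0"
proof -
  let ?B = "vbracket A h t"
  have fin: "finite (supp \<Pi>)" "finite (supp \<Pi>1)" "finite (supp \<Pi>2)"
    using assms(2-4) by (simp_all add: poisson_def in_CQbar_def)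
  have sym: "?B \<Pi>2 \<Pi>1 = ?B \<Pi>1 \<Pi>2"
    using assms(3,4) by (intro vbracket_commute) (auto simp: in_CQbar_def)
  have "?B \<Pi> \<Pi> = ?B (\<Pi>1 + \<Pi>2) (\<Pi>1 + \<Pi>2)"
    using fin assms(5) by (intro vbracket_veq) (simp_all add: finite_supp_add veq_def)
  then have sum: "?B \<Pi>1 \<Pi>1 + (?B \<Pi>1 \<Pi>2 + ?B \<Pi>1 \<Pi>2) + ?B \<Pi>2 \<Pi>2 \<in> relspan V A h t"
    using assms(2) fin sym by (simp add: vbracket_add_square poisson_def veq_def)
  have len: "length_supported (2 * p1 + 2) (?B \<Pi>1 \<Pi>1)"
    "length_supported (p1 + p2 + 2) (?B \<Pi>1 \<Pi>2 + ?B \<Pi>1 \<Pi>2)"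
    "length_supported (2 * p2 + 2) (?B \<Pi>2 \<Pi>2)"
    using vbracket_homogeneous_length_supported fin assms(6,7)
    by (metis mult_2 length_supported_add)+
  have "?B \<Pi>1 \<Pi>1 \<in> relspan V A h t" "?B \<Pi>1 \<Pi>2 + ?B \<Pi>1 \<Pi>2 \<in> relspan V A h t"
    "?B \<Pi>2 \<Pi>2 \<in> relspan V A h t"
    using relspan_length_components[OF sum len] assms(8) by simp_all
  then show ?thesis using relspan_half[of "?B \<Pi>1 \<Pi>2"] sym by (simp add: veq_def)
qed

end
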